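(* For all integers $m,n\ge0$, $$X_{-m}S_{((n+1)^m)}=(-1)^mS_{(n^m)},\qquad X_{n-m}S_{((n+1)^m)}=(-1)^mS_{(n^{m+1})},\qquad X_nS_{(n^m)}=S_{(n^{m+1})}.$$
   Context: $(n^m)$ denotes the rectangular partition $(n,\ldots,n,0,\ldots)$ with $m$ parts equal to $n$. Schur functions: $S_\lambda(t)=\det(p_{\lambda_i-i+j}(t))_{1\le i,j\le l(\lambda)}$ with $\sum_{n\ge0}p_n(t)z^n=\exp(\sum_{k\ge1}t_kz^k)$, $p_n=0$ for $n<0$, $S_\emptyset=1$. Vertex operators $X_m$ ($m\in\mathbb{Z}$) on $\mathbb{C}[t_1,t_2,\ldots]$: $\sum_{m\in\mathbb{Z}}X_mz^m=\exp(\sum_{k\ge1}t_kz^k)\exp(-\sum_{k\ge1}\frac{z^{-k}}{k}\partial_{t_k})$. *)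

theory Defs
  imports "HOL-Library.Poly_Mapping" "HOL-Computational_Algebra.Formal_Power_Series"
          "Jordan_Normal_Form.Determinant"
begin

text \<open>Polynomials in t_1, t_2, ... with complex coefficients: a monomial is an exponent
 vector (nat with finite support, index k meaning the variable t_k; index 0 unused).\<close>
type_synonym cpoly = "(nat \<Rightarrow>\<^sub>0 nat) \<Rightarrow>\<^sub>0 complex"

definition cconst :: "complex \<Rightarrow> cpoly" where
  "cconst c = Poly_Mapping.single 0 c"

definition var :: "nat \<Rightarrow> cpoly" where
  "var k = Poly_Mapping.single (Poly_Mapping.single k 1) 1"

text \<open>exp F = sum_n F^n/n! for a formal power series F with zero constant term
 (the coefficient of z^a only involves n \<le> a).\<close>
definition fexp :: "cpoly fps \<Rightarrow> cpoly fps" where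
  "fexp F = Abs_fps (\<lambda>a. \<Sum>n\<le>a. cconst (1 / of_nat (fact n)) * fps_nth (F ^ n) a)"

definition hser :: "cpoly fps" where
  "hser = Abs_fps (\<lambda>k. if k = 0 then 0 else var k)"

definition pS :: "int \<Rightarrow> cpoly" where
  "pS a = (if a < 0 then 0 else fps_nth (fexp hser) (nat a))"

definition schur :: "nat list \<Rightarrow> cpoly" where
  "schur lam = det (mat (length lam) (length lam)
      (\<lambda>(i, j). pS (int (lam ! i) - int i + int j)))"

definition rect :: "nat \<Rightarrow> nat \<Rightarrow> nat list" where
  "rect n m = (if n = 0 then [] else replicate m n)"

definition pderivk :: "nat \<Rightarrow> cpoly \<Rightarrow> cpoly" where
  "pderivk k f = (\<Sum>\<alpha>\<in>Poly_Mapping.keys f.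
      Poly_Mapping.single (\<alpha> - Poly_Mapping.single k 1)
        (Poly_Mapping.lookup f \<alpha> * of_nat (Poly_Mapping.lookup \<alpha> k)))"

definition diffop :: "(nat \<Rightarrow>\<^sub>0 nat) \<Rightarrow> cpoly \<Rightarrow> cpoly" where
  "diffop \<alpha> f = foldr (\<lambda>k g. (pderivk k ^^ Poly_Mapping.lookup \<alpha> k) g)
                     (sorted_list_of_set (Poly_Mapping.keys \<alpha>)) f"

text \<open>Substitute the commuting operators d_{t_k} for the variables of a polynomial Q
 and apply the result to f.\<close>
definition apply_op :: "cpoly \<Rightarrow> cpoly \<Rightarrow> cpoly" where
  "apply_op Q f = (\<Sum>\<alpha>\<in>Poly_Mapping.keys Q. cconst (Poly_Mapping.lookup Q \<alpha>) * diffop \<alpha> f)"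

text \<open>exp(- sum_{k\<ge>1} w^k/k d_{t_k}) = sum_b w^b q_b(d), q_b written as a polynomial in
 the symbols d_k (represented by var k).\<close>
definition dser :: "cpoly fps" where
  "dser = Abs_fps (\<lambda>k. if k = 0 then 0 else cconst (- 1 / of_nat k) * var k)"

definition qD :: "nat \<Rightarrow> cpoly" where
  "qD b = fps_nth (fexp dser) b"

text \<open>Vertex operator: X_m is the coefficient of z^m in
 exp(sum t_k z^k) exp(- sum z^(-k)/k d_{t_k}), i.e. X_m f = sum_{a - b = m} p_a q_b(d) f.
 Only finitely many b give q_b(d) f \<noteq> 0, so the sum is over those b.\<close>
definition vertexX :: "int \<Rightarrow> cpoly \<Rightarrow> cpoly" where
  "vertexX m f = (\<Sum>b\<in>{b::nat. apply_op (qD b) f \<noteq> 0}. pS (m + int b) * apply_op (qD b) f)"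

end

(*
  The operator X_x acts by X_x f = sum_b p_(x+b) q_b(d) f, and the generating series
  sum_b w^b q_b(d) f = exp(- sum_k w^k/k d_(t_k)) f is the Miwa shift f(t - [w]).  As the
  solution of the first-order equation w dT/dw = - sum_k w^k d_(t_k) T with T(0) = f, the Miwa
  shift is a ring homomorphism, and it sends p_a to p_a - w p_(a-1).  Applied entrywise to the
  Jacobi-Trudi matrix of an integer sequence L, and after right multiplication by a unipotent
  bidiagonal matrix, this identifies S_L(t - [w]) with the expansion of the Jacobi-Trudi
  determinant of (x, L) along its first row with that row replaced by (1, w, w^2, ...).
  Summing against p_(x+b) restores the first row, so X_x S_L = S_(x, L) (Bernstein's formula).
  The three identities then follow by straightening: swapping two adjacent rows gives
  S_(..., a, b, ...) = - S_(..., b - 1, a + 1, ...), which moves the new first part past the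
  m parts n + 1, lowering each of them to n; a trailing part 0 can be dropped.
*)

theory Submission
  imports Defs
begin

unbundle fps_syntax
no_notation vec_index (infixl \<open>$\<close> 100)

abbreviation lookup :: "('a \<Rightarrow>\<^sub>0 'b::zero) \<Rightarrow> 'a \<Rightarrow> 'b" where
  "lookup \<equiv> Poly_Mapping.lookup"

abbreviation single :: "'a \<Rightarrow> 'b::zero \<Rightarrow> 'a \<Rightarrow>\<^sub>0 'b" where
  "single \<equiv> Poly_Mapping.single"

abbreviation keys :: "('a \<Rightarrow>\<^sub>0 'b::zero) \<Rightarrow> 'a set" where
  "keys \<equiv> Poly_Mapping.keys"

section \<open>Partial derivatives and differential operators\<close>

lemma sum_single_lookup: "(\<Sum>\<alpha>\<in>keys f. single \<alpha> (lookup f \<alpha>)) = f"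
  by (rule poly_mapping_eqI)
    (auto simp: lookup_sum lookup_single when_def in_keys_iff)

lemma lookup_cconst_mult: "lookup (cconst c * f) \<alpha> = c * lookup f \<alpha>"
  unfolding cconst_def mult_map_scale_conv_mult[symmetric]
  by (simp add: Poly_Mapping.map.rep_eq when_def)

lemma cconst_mult_cconst: "cconst a * cconst b = cconst (a * b)"
  by (simp add: cconst_def mult_single)

lemma cconst_0 [simp]: "cconst 0 = 0"
  and cconst_1 [simp]: "cconst 1 = 1"
  by (simp_all add: cconst_def)

lemma of_nat_eq_cconst: "of_nat n = cconst (of_nat n)"
  by (simp add: cconst_def)

lemma lookup_pderivk:
  "lookup (pderivk k f) \<alpha> = lookup f (\<alpha> + single k 1) * of_nat (lookup \<alpha> k + 1)"
proof -
  have "(lookup f \<beta> * of_nat (lookup \<beta> k) when \<beta> - single k 1 = \<alpha>)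
      = (lookup f \<beta> * of_nat (lookup \<beta> k) when \<beta> = \<alpha> + single k 1)" for \<beta>
  proof (cases "lookup \<beta> k = 0")
    case False
    then have "\<beta> - single k 1 + single k 1 = \<beta>"
      by (intro poly_mapping_eqI) (auto simp: lookup_add lookup_minus lookup_single when_def)
    then have "(\<beta> - single k 1 = \<alpha>) = (\<beta> = \<alpha> + single k 1)"
      by auto
    then show ?thesis by simp
  qed simp
  then have "lookup (pderivk k f) \<alpha>
      = (\<Sum>\<beta>\<in>keys f. lookup f \<beta> * of_nat (lookup \<beta> k) when \<beta> = \<alpha> + single k 1)"
    unfolding pderivk_def by (simp add: lookup_sum lookup_single eq_commute)
  then show ?thesis
    by (simp add: when_def in_keys_iff lookup_add)
qed

lemma additive_pderivk: "additive (pderivk k)"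
  by unfold_locales
    (rule poly_mapping_eqI, simp add: lookup_pderivk lookup_add ring_distribs)

lemmas pderivk_0 [simp] = additive.zero[OF additive_pderivk]
  and pderivk_add = additive.add[OF additive_pderivk]
  and pderivk_uminus = additive.minus[OF additive_pderivk]
  and pderivk_sum = additive.sum[OF additive_pderivk]

lemma pderivk_single:
  "pderivk k (single \<alpha> c) = single (\<alpha> - single k 1) (c * of_nat (lookup \<alpha> k))"
  by (cases "c = 0") (simp_all add: pderivk_def)

lemma pderivk_mult_single:
  "pderivk k (single \<alpha> c * single \<beta> d) =
     pderivk k (single \<alpha> c) * single \<beta> d + single \<alpha> c * pderivk k (single \<beta> d)"
proof -
  have shift: "single (\<gamma> - single k 1) (x * of_nat (lookup \<gamma> k)) * single \<delta> y
      = single (\<gamma> + \<delta> - single k 1) (x * of_nat (lookup \<gamma> k) * y)"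
    for \<gamma> \<delta> and x y :: complex
  proof (cases "lookup \<gamma> k = 0")
    case False
    then have "\<gamma> - single k 1 + \<delta> = \<gamma> + \<delta> - single k 1"
      by (intro poly_mapping_eqI) (auto simp: lookup_add lookup_minus lookup_single when_def)
    then show ?thesis by (simp only: mult_single)
  qed simp
  have "pderivk k (single \<alpha> c * single \<beta> d)
      = single (\<alpha> + \<beta> - single k 1) (c * of_nat (lookup \<alpha> k) * d)
        + single (\<beta> + \<alpha> - single k 1) (d * of_nat (lookup \<beta> k) * c)"
  proof -
    have "c * d * of_nat (lookup (\<alpha> + \<beta>) k)
        = c * of_nat (lookup \<alpha> k) * d + d * of_nat (lookup \<beta> k) * c"
      by (simp add: lookup_add algebra_simps)
    then show ?thesis
      by (simp add: mult_single pderivk_single add.commute[of \<beta>] single_add)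
  qed
  also have "\<dots> = pderivk k (single \<alpha> c) * single \<beta> d + single \<alpha> c * pderivk k (single \<beta> d)"
    by (simp only: pderivk_single shift mult.commute[of "single \<alpha> c"])
  finally show ?thesis .
qed

lemma pderivk_mult: "pderivk k (f * g) = pderivk k f * g + f * pderivk k g"
proof -
  let ?f = "\<lambda>\<alpha>. single \<alpha> (lookup f \<alpha>)" and ?g = "\<lambda>\<beta>. single \<beta> (lookup g \<beta>)"
  have "pderivk k (f * g) = pderivk k ((\<Sum>\<alpha>\<in>keys f. ?f \<alpha>) * (\<Sum>\<beta>\<in>keys g. ?g \<beta>))"
    by (simp only: sum_single_lookup)
  also have "\<dots> = (\<Sum>\<alpha>\<in>keys f. \<Sum>\<beta>\<in>keys g. pderivk k (?f \<alpha>) * ?g \<beta> + ?f \<alpha> * pderivk k (?g \<beta>))"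
    by (simp add: sum_product pderivk_sum pderivk_mult_single)
  also have "\<dots> = pderivk k (\<Sum>\<alpha>\<in>keys f. ?f \<alpha>) * (\<Sum>\<beta>\<in>keys g. ?g \<beta>)
      + (\<Sum>\<alpha>\<in>keys f. ?f \<alpha>) * pderivk k (\<Sum>\<beta>\<in>keys g. ?g \<beta>)"
    by (simp add: pderivk_sum sum.distrib sum_product)
  finally show ?thesis
    by (simp only: sum_single_lookup)
qed

lemma pderivk_cconst [simp]: "pderivk k (cconst c) = 0"
  by (simp add: cconst_def pderivk_single)

lemma pderivk_of_nat [simp]: "pderivk k (of_nat n) = 0"
  by (simp only: of_nat_eq_cconst pderivk_cconst)

lemma pderivk_one [simp]: "pderivk k 1 = 0"
  using pderivk_of_nat[of k 1] by simp

lemma pderivk_cconst_mult: "pderivk k (cconst c * f) = cconst c * pderivk k f"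
  by (simp add: pderivk_mult)

lemma pderivk_of_nat_mult: "pderivk k (of_nat n * f) = of_nat n * pderivk k f"
  by (simp add: pderivk_mult)

lemma pderivk_var: "pderivk k (var j) = (if j = k then 1 else 0)"
  by (simp add: var_def pderivk_single lookup_single)

lemma pderivk_commute: "pderivk k (pderivk l f) = pderivk l (pderivk k f)"
  by (rule poly_mapping_eqI)
    (cases "k = l"; simp add: lookup_pderivk lookup_add lookup_single ac_simps)

interpretation pderivk: comp_fun_commute pderivk
  by unfold_locales (simp add: fun_eq_iff pderivk_commute)

lemma diffop_eq_fold:
  "diffop \<alpha> f = Finite_Set.fold (\<lambda>k. pderivk k ^^ lookup \<alpha> k) f (keys \<alpha>)"
proof -
  interpret comp_fun_commute "\<lambda>k. pderivk k ^^ lookup \<alpha> k"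
    by (rule pderivk.comp_fun_commute_funpow)
  show ?thesis
    using fold_set_fold_remdups[where xs = "sorted_list_of_set (keys \<alpha>)" and y = f]
    by (simp add: diffop_def foldr_fold comp_fun_commute distinct_remdups_id)
qed

lemma diffop_add_single: "diffop (\<alpha> + single k 1) f = pderivk k (diffop \<alpha> f)"
proof -
  define G where "G \<beta> = (\<lambda>j. pderivk j ^^ lookup \<beta> j)" for \<beta>
  interpret G: comp_fun_commute "G \<alpha>"
    unfolding G_def by (rule pderivk.comp_fun_commute_funpow)
  interpret G': comp_fun_commute "G (\<alpha> + single k 1)"
    unfolding G_def by (rule pderivk.comp_fun_commute_funpow)
  have keys: "keys (\<alpha> + single k 1) = insert k (keys \<alpha>)"
    by (auto simp: in_keys_iff lookup_add lookup_single when_def split: if_splits)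
  have "diffop (\<alpha> + single k 1) f = Finite_Set.fold (G (\<alpha> + single k 1)) f (insert k (keys \<alpha>))"
    by (simp only: diffop_eq_fold G_def keys)
  also have "\<dots> = G (\<alpha> + single k 1) k (Finite_Set.fold (G (\<alpha> + single k 1)) f (keys \<alpha> - {k}))"
    by (rule G'.fold_insert_remove) simp
  also have "Finite_Set.fold (G (\<alpha> + single k 1)) f (keys \<alpha> - {k})
      = Finite_Set.fold (G \<alpha>) f (keys \<alpha> - {k})"
  proof (rule Finite_Set.fold_cong[where S = UNIV])
    show "G (\<alpha> + single k 1) j = G \<alpha> j" if "j \<in> keys \<alpha> - {k}" for j
      using that by (simp add: G_def lookup_add lookup_single)
  qed (fact G'.comp_fun_commute_on_axioms G.comp_fun_commute_on_axioms | simp)+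
  also have "G (\<alpha> + single k 1) k (Finite_Set.fold (G \<alpha>) f (keys \<alpha> - {k}))
      = pderivk k (G \<alpha> k (Finite_Set.fold (G \<alpha>) f (keys \<alpha> - {k})))"
    by (simp add: G_def lookup_add)
  also have "G \<alpha> k (Finite_Set.fold (G \<alpha>) f (keys \<alpha> - {k})) = Finite_Set.fold (G \<alpha>) f (insert k (keys \<alpha>))"
    by (rule G.fold_insert_remove[symmetric]) simp
  also have "\<dots> = diffop \<alpha> f"
  proof (cases "k \<in> keys \<alpha>")
    case True
    then show ?thesis by (simp add: diffop_eq_fold G_def insert_absorb)
  next
    case False
    then have "Finite_Set.fold (G \<alpha>) f (insert k (keys \<alpha>))
        = G \<alpha> k (Finite_Set.fold (G \<alpha>) f (keys \<alpha>))"
      by (intro G.fold_insert) simp_all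
    with False show ?thesis by (simp add: diffop_eq_fold G_def in_keys_iff)
  qed
  finally show ?thesis .
qed

lemma apply_op_superset:
  assumes "finite S" "keys Q \<subseteq> S"
  shows "apply_op Q f = (\<Sum>\<alpha>\<in>S. cconst (lookup Q \<alpha>) * diffop \<alpha> f)"
  unfolding apply_op_def
  by (rule sum.mono_neutral_left) (use assms in \<open>auto simp: in_keys_iff\<close>)

lemma apply_op_add: "apply_op (P + Q) f = apply_op P f + apply_op Q f"
proof -
  let ?S = "keys P \<union> keys Q"
  have "apply_op (P + Q) f = (\<Sum>\<alpha>\<in>?S. cconst (lookup (P + Q) \<alpha>) * diffop \<alpha> f)"
    by (rule apply_op_superset) (auto simp: keys_add)
  also have "\<dots> = (\<Sum>\<alpha>\<in>?S. cconst (lookup P \<alpha>) * diffop \<alpha> f) + (\<Sum>\<alpha>\<in>?S. cconst (lookup Q \<alpha>) * diffop \<alpha> f)"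
    by (simp add: lookup_add cconst_def single_add ring_distribs sum.distrib)
  also have "\<dots> = apply_op P f + apply_op Q f"
    by (simp add: apply_op_superset[where S = ?S])
  finally show ?thesis .
qed

lemma apply_op_zero [simp]: "apply_op 0 f = 0"
  by (simp add: apply_op_def)

lemma apply_op_sum: "apply_op (sum P A) f = (\<Sum>x\<in>A. apply_op (P x) f)"
  by (induction A rule: infinite_finite_induct) (simp_all add: apply_op_add)

lemma apply_op_single: "apply_op (single \<alpha> c) f = cconst c * diffop \<alpha> f"
  by (cases "c = 0") (simp_all add: apply_op_def)

lemma apply_op_one [simp]: "apply_op 1 f = f"
  using apply_op_single[of 0 1 f] by (simp add: cconst_def diffop_def)

lemma apply_op_cconst_mult: "apply_op (cconst c * Q) f = cconst c * apply_op Q f"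
proof -
  have "apply_op (cconst c * Q) f = (\<Sum>\<alpha>\<in>keys Q. cconst (lookup (cconst c * Q) \<alpha>) * diffop \<alpha> f)"
    by (rule apply_op_superset) (auto simp: in_keys_iff lookup_cconst_mult)
  then show ?thesis
    by (simp add: apply_op_def lookup_cconst_mult sum_distrib_left cconst_mult_cconst[symmetric] mult.assoc)
qed

lemma apply_op_uminus: "apply_op (- Q) f = - apply_op Q f"
  using apply_op_cconst_mult[of "- 1" Q f] by (simp add: cconst_def single_uminus)

lemma apply_op_var_mult: "apply_op (var k * Q) f = pderivk k (apply_op Q f)"
proof -
  have "var k * Q = (\<Sum>\<alpha>\<in>keys Q. single (\<alpha> + single k 1) (lookup Q \<alpha>))"
    by (subst (1) sum_single_lookup[symmetric])
      (simp add: sum_distrib_left var_def mult_single add.commute)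
  then have "apply_op (var k * Q) f = (\<Sum>\<alpha>\<in>keys Q. cconst (lookup Q \<alpha>) * diffop (\<alpha> + single k 1) f)"
    by (simp add: apply_op_sum apply_op_single)
  also have "\<dots> = pderivk k (apply_op Q f)"
    by (simp only: apply_op_def pderivk_sum diffop_add_single pderivk_cconst_mult)
  finally show ?thesis .
qed

section \<open>Exponentials of power series\<close>

lemma fps_deriv_eq_mult_imp_0:
  fixes G H :: "'a::{idom, semiring_char_0} fps"
  assumes "fps_deriv G = H * G" and "G $ 0 = 0"
  shows "G = 0"
proof (rule fps_ext)
  show "G $ n = 0 $ n" for n
  proof (induction n rule: less_induct)
    case (less n)
    show ?case
    proof (cases n)
      case (Suc m)
      have "of_nat (Suc m) * G $ Suc m = (H * G) $ m"
        using fps_deriv_nth[of G m] by (simp add: assms(1))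
      also have "\<dots> = 0"
        using less.IH Suc by (simp add: fps_mult_nth)
      finally show ?thesis
        using Suc by (simp del: of_nat_Suc)
    qed (simp add: assms(2))
  qed
qed

lemma fps_mult_nth_eq_0:
  fixes A C :: "'a::comm_semiring_0 fps"
  assumes "\<And>i. i \<le> n \<Longrightarrow> C $ i = 0"
  shows "(C * A) $ n = 0" and "(A * C) $ n = 0"
  using assms by (simp_all add: fps_mult_nth)

lemma fps_X_mult_deriv_nth: "(fps_X * fps_deriv A) $ n = of_nat n * A $ n"
  by (cases n) (simp_all del: of_nat_Suc)

definition exp_series :: "cpoly fps" where
  "exp_series = Abs_fps (\<lambda>n. cconst (1 / of_nat (fact n)))"

lemma fexp_eq_compose: "fexp F = exp_series oo F"
  by (simp add: fexp_def fps_compose_def exp_series_def atLeast0AtMost)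

lemma fps_deriv_exp_series: "fps_deriv exp_series = exp_series"
proof (rule fps_ext)
  fix n
  have "of_nat (Suc n) * (1 / of_nat (fact (Suc n))) = (1 / of_nat (fact n) :: complex)"
    unfolding fact_Suc of_nat_mult by (simp del: of_nat_Suc)
  then show "fps_deriv exp_series $ n = exp_series $ n"
    by (simp add: exp_series_def of_nat_eq_cconst cconst_mult_cconst del: of_nat_Suc)
qed

lemma fexp_nth_0 [simp]: "fexp F $ 0 = 1"
  by (simp add: fexp_def)

lemma fps_deriv_fexp: "F $ 0 = 0 \<Longrightarrow> fps_deriv (fexp F) = fps_deriv F * fexp F"
  by (simp add: fexp_eq_compose fps_compose_deriv fps_deriv_exp_series mult.commute)

definition fps_pderivk :: "nat \<Rightarrow> cpoly fps \<Rightarrow> cpoly fps" where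
  "fps_pderivk k A = Abs_fps (\<lambda>n. pderivk k (A $ n))"

lemma fps_pderivk_nth [simp]: "fps_pderivk k A $ n = pderivk k (A $ n)"
  by (simp add: fps_pderivk_def)

lemma fps_pderivk_mult: "fps_pderivk k (A * B) = fps_pderivk k A * B + A * fps_pderivk k B"
  by (rule fps_ext) (simp add: fps_mult_nth pderivk_sum pderivk_mult sum.distrib)

lemma fps_deriv_fps_pderivk: "fps_deriv (fps_pderivk k A) = fps_pderivk k (fps_deriv A)"
  by (rule fps_ext) (simp add: pderivk_of_nat_mult del: of_nat_Suc)

lemma fps_pderivk_fexp:
  assumes "F $ 0 = 0"
  shows "fps_pderivk k (fexp F) = fps_pderivk k F * fexp F"
proof -
  define G where "G = fps_pderivk k (fexp F) - fps_pderivk k F * fexp F"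
  have "fps_deriv G = fps_deriv F * G"
    by (simp add: G_def fps_deriv_fps_pderivk fps_deriv_fexp[OF assms] fps_pderivk_mult algebra_simps)
  moreover have "G $ 0 = 0"
    by (simp add: G_def assms)
  ultimately have "G = 0"
    by (rule fps_deriv_eq_mult_imp_0)
  then show ?thesis
    by (simp add: G_def)
qed

section \<open>The Miwa shift\<close>

lemma pS_neg: "a < 0 \<Longrightarrow> pS a = 0"
  by (simp add: pS_def)

lemma pS_0 [simp]: "pS 0 = 1"
  by (simp add: pS_def)

lemma pderivk_pS:
  assumes "k \<ge> 1"
  shows "pderivk k (pS a) = pS (a - int k)"
proof (cases "a < 0")
  case True
  then show ?thesis by (simp add: pS_neg)
next
  case False
  then obtain n where a: "a = int n"
    by (metis nonneg_int_cases not_less)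
  have "fps_pderivk k hser = fps_X ^ k"
    using assms by (intro fps_ext) (simp add: hser_def pderivk_var)
  then have "fps_pderivk k (fexp hser) = fps_X ^ k * fexp hser"
    by (simp add: fps_pderivk_fexp hser_def)
  then have "pderivk k (fexp hser $ n) = (fps_X ^ k * fexp hser) $ n"
    by (metis fps_pderivk_nth)
  then show ?thesis
    by (auto simp: a pS_def fps_X_power_mult_nth nat_diff_distrib)
qed

lemma qD_0 [simp]: "qD 0 = 1"
  by (simp add: qD_def)

lemma qD_recurrence: "of_nat b * qD b = - (\<Sum>k\<in>{1..b}. var k * qD (b - k))"
proof -
  have "fps_X * fps_deriv dser = - hser"
  proof (rule fps_ext)
    fix n
    have "of_nat n * cconst (- 1 / of_nat n) = (if n = 0 then 0 else - 1 :: cpoly)"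
    proof (cases n)
      case (Suc m)
      have "of_nat n * cconst (- 1 / of_nat n) = cconst (- 1)"
        unfolding of_nat_eq_cconst cconst_mult_cconst using Suc by (simp del: of_nat_Suc)
      then show ?thesis
        using Suc by (simp add: cconst_def single_uminus)
    qed simp
    then show "(fps_X * fps_deriv dser) $ n = (- hser) $ n"
      by (simp add: fps_X_mult_deriv_nth dser_def hser_def mult.assoc[symmetric])
  qed
  then have "fps_X * fps_deriv (fexp dser) = - (hser * fexp dser)"
    by (simp add: fps_deriv_fexp dser_def mult.assoc[symmetric])
  then have "of_nat b * qD b = - ((hser * fexp dser) $ b)"
    unfolding qD_def by (metis fps_X_mult_deriv_nth fps_neg_nth)
  also have "(hser * fexp dser) $ b = (\<Sum>k\<in>{1..b}. var k * qD (b - k))"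
    by (simp add: fps_mult_nth sum.atLeast_Suc_atMost hser_def qD_def)
  finally show ?thesis .
qed

definition miwa_shift :: "cpoly \<Rightarrow> cpoly fps" where
  "miwa_shift f = Abs_fps (\<lambda>b. apply_op (qD b) f)"

lemma miwa_shift_nth [simp]: "miwa_shift f $ b = apply_op (qD b) f"
  by (simp add: miwa_shift_def)

text \<open>The equation w T' = - sum_(k >= 1) w^k d_(t_k) T, read coefficientwise.\<close>

definition miwa_ode :: "cpoly fps \<Rightarrow> bool" where
  "miwa_ode T \<longleftrightarrow> (\<forall>n. of_nat n * T $ n + (\<Sum>k\<in>{1..n}. pderivk k (T $ (n - k))) = 0)"

lemma miwa_ode_miwa_shift: "miwa_ode (miwa_shift f)"
  unfolding miwa_ode_def
proof
  fix n
  have "of_nat n * apply_op (qD n) f = apply_op (of_nat n * qD n) f"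
    by (simp add: of_nat_eq_cconst apply_op_cconst_mult)
  also have "\<dots> = - (\<Sum>k\<in>{1..n}. pderivk k (apply_op (qD (n - k)) f))"
    by (simp add: qD_recurrence apply_op_uminus apply_op_sum apply_op_var_mult)
  finally show "of_nat n * miwa_shift f $ n + (\<Sum>k\<in>{1..n}. pderivk k (miwa_shift f $ (n - k))) = 0"
    by simp
qed

lemma miwa_ode_nth:
  "miwa_ode T \<Longrightarrow> of_nat n * T $ n = - (\<Sum>k\<in>{1..n}. pderivk k (T $ (n - k)))"
  by (simp add: miwa_ode_def eq_neg_iff_add_eq_0)

lemma miwa_ode_unique:
  assumes "miwa_ode A" and "miwa_ode B" and "A $ 0 = B $ 0"
  shows "A = B"
proof (rule fps_ext)
  show "A $ n = B $ n" for n
  proof (induction n rule: less_induct)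
    case (less n)
    show ?case
    proof (cases "n = 0")
      case False
      have "of_nat n * A $ n = - (\<Sum>k\<in>{1..n}. pderivk k (A $ (n - k)))"
        using assms(1) by (rule miwa_ode_nth)
      also have "\<dots> = - (\<Sum>k\<in>{1..n}. pderivk k (B $ (n - k)))"
        using less.IH False by (intro arg_cong[where f = uminus] sum.cong) auto
      also have "\<dots> = of_nat n * B $ n"
        using assms(2) by (rule miwa_ode_nth[symmetric])
      finally show ?thesis
        using False by simp
    qed (use assms(3) in simp)
  qed
qed

lemma miwa_ode_0: "miwa_ode 0"
  by (simp add: miwa_ode_def)

lemma miwa_ode_1: "miwa_ode 1"
  by (auto simp: miwa_ode_def intro!: sum.neutral)

lemma miwa_ode_add:
  assumes "miwa_ode A" and "miwa_ode B"
  shows "miwa_ode (A + B)"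
  unfolding miwa_ode_def
proof
  fix n
  have "of_nat n * (A + B) $ n + (\<Sum>k\<in>{1..n}. pderivk k ((A + B) $ (n - k)))
      = (of_nat n * A $ n + (\<Sum>k\<in>{1..n}. pderivk k (A $ (n - k))))
        + (of_nat n * B $ n + (\<Sum>k\<in>{1..n}. pderivk k (B $ (n - k))))"
    by (simp add: pderivk_add sum.distrib algebra_simps)
  then show "of_nat n * (A + B) $ n + (\<Sum>k\<in>{1..n}. pderivk k ((A + B) $ (n - k))) = 0"
    using assms by (simp add: miwa_ode_def)
qed

lemma miwa_ode_mult:
  assumes "miwa_ode A" and "miwa_ode B"
  shows "miwa_ode (A * B)"
proof -
  \<comment> \<open>Truncating \<open>\<Sum>k. X^k \<partial>\<^sub>k\<close> at \<open>N\<close> gives a finite sum of derivations that is exact in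
    degrees \<open>\<le> N\<close>.\<close>
  define S where "S N T = (\<Sum>k\<in>{1..N}. fps_X ^ k * fps_pderivk k T)" for N T
  have S_nth: "S N T $ n = (\<Sum>k\<in>{1..n}. pderivk k (T $ (n - k)))" if "n \<le> N" for N T n
  proof -
    have "S N T $ n = (\<Sum>k\<in>{1..N}. if n < k then 0 else pderivk k (T $ (n - k)))"
      by (simp add: S_def fps_sum_nth fps_X_power_mult_nth cong: if_cong)
    also have "\<dots> = (\<Sum>k\<in>{1..n}. if n < k then 0 else pderivk k (T $ (n - k)))"
      by (rule sum.mono_neutral_right) (use that in auto)
    finally show ?thesis
      by simp
  qed
  have ode: "(fps_X * fps_deriv T + S N T) $ n = 0" if "miwa_ode T" "n \<le> N" for T N n
    using that by (simp add: S_nth fps_X_mult_deriv_nth miwa_ode_def)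
  show ?thesis
    unfolding miwa_ode_def
  proof
    fix n
    have "fps_X * fps_deriv (A * B) + S n (A * B)
        = (fps_X * fps_deriv A + S n A) * B + A * (fps_X * fps_deriv B + S n B)"
      by (simp add: S_def fps_pderivk_mult sum.distrib sum_distrib_left sum_distrib_right
          algebra_simps)
    moreover have "((fps_X * fps_deriv A + S n A) * B) $ n = 0"
      by (rule fps_mult_nth_eq_0(1)) (rule ode[OF assms(1)])
    moreover have "(A * (fps_X * fps_deriv B + S n B)) $ n = 0"
      by (rule fps_mult_nth_eq_0(2)) (rule ode[OF assms(2)])
    ultimately have "(fps_X * fps_deriv (A * B) + S n (A * B)) $ n = 0"
      by simp
    then show "of_nat n * (A * B) $ n + (\<Sum>k\<in>{1..n}. pderivk k ((A * B) $ (n - k))) = 0"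
      by (simp only: fps_add_nth fps_X_mult_deriv_nth S_nth order_refl)
  qed
qed

lemma miwa_shift_eqI: "miwa_ode T \<Longrightarrow> T $ 0 = f \<Longrightarrow> miwa_shift f = T"
  by (rule miwa_ode_unique) (simp_all add: miwa_ode_miwa_shift)

interpretation miwa_shift: comm_ring_hom miwa_shift
  by unfold_locales
    (auto intro!: miwa_shift_eqI miwa_ode_0 miwa_ode_1 miwa_ode_add miwa_ode_mult miwa_ode_miwa_shift)

lemma miwa_ode_linear:
  assumes "pderivk 1 c = d" and "\<And>k. k \<ge> 2 \<Longrightarrow> pderivk k c = pderivk (k - 1) d"
  shows "miwa_ode (fps_const c - fps_X * fps_const d)"
  unfolding miwa_ode_def
proof
  fix n
  let ?P = "fps_const c - fps_X * fps_const d"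
  show "of_nat n * ?P $ n + (\<Sum>k\<in>{1..n}. pderivk k (?P $ (n - k))) = 0"
  proof (cases "n \<ge> 2")
    case True
    have "(\<Sum>k\<in>{1..n}. pderivk k (?P $ (n - k)))
        = (\<Sum>k\<in>{1..n}. (if k = n then pderivk k c else 0) - (if k = n - 1 then pderivk k d else 0))"
      by (intro sum.cong) (auto simp: pderivk_uminus)
    also have "\<dots> = pderivk n c - pderivk (n - 1) d"
      using True by (simp add: sum_subtractf)
    finally show ?thesis
      using True assms(2) by simp
  next
    case False
    then have "n = 0 \<or> n = 1"
      by auto
    then show ?thesis
      using assms(1) by (auto simp: pderivk_uminus)
  qed
qed

lemma miwa_shift_pS: "miwa_shift (pS a) = fps_const (pS a) - fps_X * fps_const (pS (a - 1))"
  by (rule miwa_shift_eqI) (auto intro!: miwa_ode_linear simp: pderivk_pS)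

section \<open>Jacobi--Trudi determinants\<close>

lemma det_unit_row:
  fixes A :: "'a::comm_ring_1 mat"
  assumes "A \<in> carrier_mat n n" and "r < n"
    and "\<And>j. j < n \<Longrightarrow> A $$ (r, j) = (if j = r then 1 else 0)"
  shows "det A = det (mat_delete A r r)"
proof -
  have "det A = (\<Sum>j<n. A $$ (r, j) * cofactor A r j)"
    by (rule laplace_expansion_row[OF assms(1,2)])
  also have "\<dots> = (\<Sum>j<n. if j = r then cofactor A r j else 0)"
    using assms(3) by (intro sum.cong) auto
  also have "\<dots> = cofactor A r r"
    using assms(2) by simp
  finally show ?thesis
    by (simp add: cofactor_def)
qed

lemma index_mult_bidiagonal:
  fixes A :: "'a::comm_ring_1 mat"
  assumes "A \<in> carrier_mat n n" and "i < n" and "j < n"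
  shows "(A * mat n n (\<lambda>(i, j). if i = j then 1 else if j = Suc i then - c else 0)) $$ (i, j)
       = A $$ (i, j) - (if j = 0 then 0 else c * A $$ (i, j - 1))"
proof -
  have "(A * mat n n (\<lambda>(i, j). if i = j then 1 else if j = Suc i then - c else 0)) $$ (i, j)
      = (\<Sum>k<n. (if k = j then A $$ (i, k) else 0)
          - (if k = j - 1 then (if j = 0 then 0 else c * A $$ (i, k)) else 0))"
    using assms by (simp add: scalar_prod_def lessThan_atLeast0) (intro sum.cong; auto)
  then show ?thesis
    using assms(3) by (simp add: sum_subtractf)
qed

lemma det_bidiagonal:
  "det (mat n n (\<lambda>(i, j). if i = j then 1 else if j = Suc i then - c else 0 :: 'a::comm_ring_1)) = 1"
proof -
  let ?U = "mat n n (\<lambda>(i, j). if i = j then 1 else if j = Suc i then - c else 0 :: 'a)"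
  have "det ?U = prod_list (diag_mat ?U)"
    by (rule det_upper_triangular) (auto simp: upper_triangular_def)
  then show ?thesis
    by (simp add: prod_list_diag_prod)
qed

interpretation fps_const: comm_ring_hom "fps_const :: 'a::comm_ring_1 \<Rightarrow> 'a fps"
  by unfold_locales simp_all

lemma det_powers_first_row:
  fixes N :: "'a::comm_ring_1 mat"
  assumes N: "N \<in> carrier_mat (Suc l) (Suc l)"
  shows "det (mat (Suc l) (Suc l) (\<lambda>(i, j). if i = 0 then fps_X ^ j else fps_const (N $$ (i, j))))
       = (\<Sum>j<Suc l. fps_X ^ j * fps_const (cofactor N 0 j))"
    (is "det ?Q = _")
proof -
  have "cofactor ?Q 0 j = fps_const (cofactor N 0 j)" for j
  proof -
    have "mat_delete ?Q 0 j = map_mat fps_const (mat_delete N 0 j)"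
      using N by (intro eq_matI) (auto simp: mat_delete_def)
    then show ?thesis
      by (simp add: cofactor_def fps_const.hom_mult fps_const.hom_power fps_const.hom_uminus)
  qed
  then have "(\<Sum>j<Suc l. ?Q $$ (0, j) * cofactor ?Q 0 j)
      = (\<Sum>j<Suc l. fps_X ^ j * fps_const (cofactor N 0 j))"
    by (intro sum.cong) auto
  moreover have "det ?Q = (\<Sum>j<Suc l. ?Q $$ (0, j) * cofactor ?Q 0 j)"
    by (rule laplace_expansion_row) auto
  ultimately show ?thesis
    by simp
qed

lemma det_row_shift_eq_cofactor_expansion:
  fixes N :: "'a::comm_ring_1 mat"
  assumes N: "N \<in> carrier_mat (Suc l) (Suc l)"
  shows "det (mat l l (\<lambda>(i, j). fps_const (N $$ (Suc i, Suc j)) - fps_X * fps_const (N $$ (Suc i, j))))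
       = (\<Sum>j<Suc l. fps_X ^ j * fps_const (cofactor N 0 j))"
proof -
  define Q where "Q = mat (Suc l) (Suc l)
    (\<lambda>(i, j). if i = 0 then fps_X ^ j else fps_const (N $$ (i, j)) :: 'a fps)"
  define U where "U = mat (Suc l) (Suc l)
    (\<lambda>(i, j). if i = j then 1 else if j = Suc i then - fps_X else 0 :: 'a fps)"
  \<comment> \<open>Right multiplication by \<open>U\<close> subtracts \<open>fps_X\<close> times column \<open>j - 1\<close> from column \<open>j\<close>:
    it clears the first row \<open>(1, X, X^2, ...)\<close> of \<open>Q\<close> except for its leading 1.\<close>
  have Q: "Q \<in> carrier_mat (Suc l) (Suc l)" and U: "U \<in> carrier_mat (Suc l) (Suc l)"
    by (simp_all add: Q_def U_def)
  have QU: "(Q * U) $$ (i, j) = Q $$ (i, j) - (if j = 0 then 0 else fps_X * Q $$ (i, j - 1))"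
    if "i < Suc l" "j < Suc l" for i j
    unfolding U_def by (rule index_mult_bidiagonal[OF Q that])
  have det_Q: "det Q = (\<Sum>j<Suc l. fps_X ^ j * fps_const (cofactor N 0 j))"
    unfolding Q_def by (rule det_powers_first_row[OF N])
  have det_U: "det U = 1"
    unfolding U_def by (rule det_bidiagonal)
  have "det (Q * U) = det (mat_delete (Q * U) 0 0)"
  proof (rule det_unit_row)
    show "(Q * U) $$ (0, j) = (if j = 0 then 1 else 0)" if "j < Suc l" for j
      unfolding QU[OF zero_less_Suc that] using that by (simp add: Q_def power_eq_if)
  qed (use Q U in auto)
  also have "mat_delete (Q * U) 0 0
      = mat l l (\<lambda>(i, j). fps_const (N $$ (Suc i, Suc j)) - fps_X * fps_const (N $$ (Suc i, j)))"
  proof -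
    have "Q $$ (Suc i, j) = fps_const (N $$ (Suc i, j))" if "i < l" "j < Suc l" for i j
      using that by (simp add: Q_def)
    with Q U show ?thesis
      by (intro eq_matI) (auto simp: mat_delete_def QU simp del: index_mult_mat(1))
  qed
  finally show ?thesis
    using det_mult[OF Q U] det_Q det_U by simp
qed

definition jacobi_trudi_mat :: "int list \<Rightarrow> cpoly mat" where
  "jacobi_trudi_mat L = mat (length L) (length L) (\<lambda>(i, j). pS (L ! i - int i + int j))"

definition jacobi_trudi :: "int list \<Rightarrow> cpoly" where
  "jacobi_trudi L = det (jacobi_trudi_mat L)"

lemma schur_eq_jacobi_trudi: "schur lam = jacobi_trudi (map int lam)"
  unfolding schur_def jacobi_trudi_def jacobi_trudi_mat_def
  by (intro arg_cong[where f = det] cong_mat) auto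

lemma miwa_shift_jacobi_trudi:
  "miwa_shift (jacobi_trudi L)
     = (\<Sum>j<Suc (length L). fps_X ^ j * fps_const (cofactor (jacobi_trudi_mat (x # L)) 0 j))"
proof -
  let ?N = "jacobi_trudi_mat (x # L)"
  have "miwa_shift (jacobi_trudi L) = det (map_mat miwa_shift (jacobi_trudi_mat L))"
    by (simp add: jacobi_trudi_def)
  also have "map_mat miwa_shift (jacobi_trudi_mat L) = mat (length L) (length L)
      (\<lambda>(i, j). fps_const (?N $$ (Suc i, Suc j)) - fps_X * fps_const (?N $$ (Suc i, j)))"
    by (intro eq_matI) (simp_all add: jacobi_trudi_mat_def miwa_shift_pS algebra_simps)
  also have "det \<dots> = (\<Sum>j<Suc (length L). fps_X ^ j * fps_const (cofactor ?N 0 j))"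
    by (rule det_row_shift_eq_cofactor_expansion) (simp add: jacobi_trudi_mat_def)
  finally show ?thesis .
qed

lemma vertexX_jacobi_trudi: "vertexX x (jacobi_trudi L) = jacobi_trudi (x # L)"
proof -
  let ?N = "jacobi_trudi_mat (x # L)" and ?l = "Suc (length L)"
  have coeff: "apply_op (qD b) (jacobi_trudi L) = (if b < ?l then cofactor ?N 0 b else 0)" for b
  proof -
    have "apply_op (qD b) (jacobi_trudi L) = (\<Sum>j<?l. if j = b then cofactor ?N 0 j else 0)"
      unfolding miwa_shift_nth[symmetric] miwa_shift_jacobi_trudi[of L x] fps_sum_nth
      by (intro sum.cong) (auto simp: fps_X_power_mult_nth)
    then show ?thesis
      by simp
  qed
  have "vertexX x (jacobi_trudi L)
      = (\<Sum>b\<in>{b. apply_op (qD b) (jacobi_trudi L) \<noteq> 0}. pS (x + int b) * apply_op (qD b) (jacobi_trudi L))"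
    by (simp add: vertexX_def)
  also have "\<dots> = (\<Sum>b<?l. pS (x + int b) * apply_op (qD b) (jacobi_trudi L))"
    by (rule sum.mono_neutral_left) (auto simp: coeff split: if_splits)
  also have "\<dots> = (\<Sum>b<?l. ?N $$ (0, b) * cofactor ?N 0 b)"
    by (simp add: coeff jacobi_trudi_mat_def)
  also have "\<dots> = jacobi_trudi (x # L)"
    unfolding jacobi_trudi_def
    by (rule laplace_expansion_row[symmetric]) (auto simp: jacobi_trudi_mat_def)
  finally show ?thesis .
qed

lemma jacobi_trudi_straighten:
  "jacobi_trudi (L1 @ a # b # L2) = - jacobi_trudi (L1 @ (b - 1) # (a + 1) # L2)"
proof -
  let ?L = "L1 @ a # b # L2" and ?k = "length L1"
  have "L1 @ (b - 1) # (a + 1) # L2 = ?L[?k := b - 1, Suc ?k := a + 1]"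
    by (simp add: list_update_append)
  also have "jacobi_trudi_mat \<dots> = swaprows ?k (Suc ?k) (jacobi_trudi_mat ?L)"
    by (intro eq_matI)
      (auto simp: jacobi_trudi_mat_def mat_swaprows_def nth_list_update nth_append diff_diff_eq)
  finally have "jacobi_trudi (L1 @ (b - 1) # (a + 1) # L2) = det (swaprows ?k (Suc ?k) (jacobi_trudi_mat ?L))"
    by (simp add: jacobi_trudi_def)
  also have "\<dots> = - jacobi_trudi ?L"
    unfolding jacobi_trudi_def
    by (rule det_swaprows[where n = "length ?L"]) (auto simp: jacobi_trudi_mat_def)
  finally show ?thesis
    by simp
qed

lemma jacobi_trudi_straighten_replicate:
  "jacobi_trudi (replicate k p @ (c - int j) # replicate j (p + 1))
     = (- 1) ^ j * jacobi_trudi (replicate (k + j) p @ [c])"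
proof (induction j arbitrary: k)
  case (Suc j)
  have "jacobi_trudi (replicate k p @ (c - int (Suc j)) # (p + 1) # replicate j (p + 1))
      = - jacobi_trudi (replicate k p @ (p + 1 - 1) # (c - int (Suc j) + 1) # replicate j (p + 1))"
    by (rule jacobi_trudi_straighten)
  also have "replicate k p @ (p + 1 - 1) # (c - int (Suc j) + 1) # replicate j (p + 1)
      = replicate (Suc k) p @ (c - int j) # replicate j (p + 1)"
    by (simp add: replicate_append_same[symmetric])
  finally show ?case
    using Suc.IH[of "Suc k"] by simp
qed simp

lemma jacobi_trudi_append_0: "jacobi_trudi (L @ [0]) = jacobi_trudi L"
proof -
  let ?l = "length L"
  have "jacobi_trudi (L @ [0]) = det (mat_delete (jacobi_trudi_mat (L @ [0])) ?l ?l)"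
    unfolding jacobi_trudi_def
    by (rule det_unit_row) (auto simp: jacobi_trudi_mat_def pS_neg)
  also have "mat_delete (jacobi_trudi_mat (L @ [0])) ?l ?l = jacobi_trudi_mat L"
    by (intro eq_matI) (auto simp: mat_delete_def jacobi_trudi_mat_def nth_append)
  finally show ?thesis
    by (simp add: jacobi_trudi_def)
qed

lemma jacobi_trudi_Nil [simp]: "jacobi_trudi [] = 1"
  by (simp add: jacobi_trudi_def jacobi_trudi_mat_def det_def)

lemma jacobi_trudi_replicate_0: "jacobi_trudi (replicate k 0) = 1"
proof (induction k)
  case (Suc k)
  have "replicate (Suc k) (0::int) = replicate k 0 @ [0]"
    by (simp add: replicate_append_same)
  then show ?case
    by (simp add: jacobi_trudi_append_0 Suc.IH)
qed simp

lemma schur_rect: "schur (rect n m) = jacobi_trudi (replicate m (int n))"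
  by (simp add: rect_def schur_eq_jacobi_trudi jacobi_trudi_replicate_0 schur_def)

theorem lemma5p6:
  fixes m n :: nat
  shows "vertexX (- int m) (schur (rect (n + 1) m)) = (- 1) ^ m * schur (rect n m)
       \<and> vertexX (int n - int m) (schur (rect (n + 1) m)) = (- 1) ^ m * schur (rect n (m + 1))
       \<and> vertexX (int n) (schur (rect n m)) = schur (rect n (m + 1))"
proof -
  have vertexX_rect: "vertexX (c - int m) (schur (rect (n + 1) m))
      = (- 1) ^ m * jacobi_trudi (replicate m (int n) @ [c])" for c
  proof -
    have "vertexX (c - int m) (schur (rect (n + 1) m))
        = jacobi_trudi (replicate 0 (int n) @ (c - int m) # replicate m (int n + 1))"
      by (simp add: schur_rect vertexX_jacobi_trudi add.commute)
    also have "\<dots> = (- 1) ^ m * jacobi_trudi (replicate m (int n) @ [c])"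
      by (simp only: jacobi_trudi_straighten_replicate add_0)
    finally show ?thesis .
  qed
  show ?thesis
    using vertexX_rect[of 0] vertexX_rect[of "int n"]
    by (simp add: jacobi_trudi_append_0 schur_rect replicate_append_same vertexX_jacobi_trudi)
qed

end
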